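(* Let $(X,\tau)$ be a Hausdorff extended locally convex space and let $x\in X$ with $x\neq 0_X$. Then there exists a $\tau$-continuous linear functional $f$ on $X$ with $f(x)\neq0$.
   Context: An extended seminorm on a vector space $X$ over $\mathbb{R}$ or $\mathbb{C}$ is a map $\rho:X\to[0,\infty]$ with $\rho(\alpha x)=|\alpha|\rho(x)$ and $\rho(x+y)\le\rho(x)+\rho(y)$. An extended locally convex space $(X,\tau)$ is a vector space with the topology induced by a family $\{\rho_i\}$ of extended seminorms (neighborhood base at $x_0$: $\{x:\max_{i\in J}\rho_i(x-x_0)<\varepsilon\}$, $J$ finite, $\varepsilon>0$). *)

theory Defs
  imports "HOL-Analysis.Analysis"
begin

definition ext_seminorm :: "('k::real_normed_field \<Rightarrow> 'v::ab_group_add \<Rightarrow> 'v) \<Rightarrow> ('v \<Rightarrow> ennreal) \<Rightarrow> bool" where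
  "ext_seminorm sc \<rho> \<longleftrightarrow>
     (\<forall>\<alpha> x. \<rho> (sc \<alpha> x) = ennreal (norm \<alpha>) * \<rho> x) \<and>
     (\<forall>x y. \<rho> (x + y) \<le> \<rho> x + \<rho> y)"

definition elc_nbhd :: "('v::ab_group_add \<Rightarrow> ennreal) set \<Rightarrow> real \<Rightarrow> 'v \<Rightarrow> 'v set" where
  "elc_nbhd J e x0 = {x. \<forall>\<rho>\<in>J. \<rho> (x - x0) < ennreal e}"

definition elc_topology :: "('v::ab_group_add \<Rightarrow> ennreal) set \<Rightarrow> 'v topology" where
  "elc_topology F = topology (\<lambda>U. \<forall>x0\<in>U. \<exists>J e. finite J \<and> J \<subseteq> F \<and> e > 0 \<and> elc_nbhd J e x0 \<subseteq> U)"

definition ext_lcs :: "('k::real_normed_field \<Rightarrow> 'v::ab_group_add \<Rightarrow> 'v) \<Rightarrow> ('v \<Rightarrow> ennreal) set \<Rightarrow> bool" where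
  "ext_lcs sc F \<longleftrightarrow> vector_space sc \<and> (\<forall>\<rho>\<in>F. ext_seminorm sc \<rho>)"

end

theory Submission
  imports Defs
begin

(* Hausdorffness yields a seminorm rho of the family with rho x \<noteq> 0. The vectors of finite
   seminorm form a subspace on which rho is an ordinary seminorm, so the Hahn-Banach theorem (Zorn's
   lemma applied to graphs of dominated partial linear functionals) extends t x \<mapsto> t c to a real
   linear functional g with |g| \<le> rho. Here c = rho x, or c = 1 if rho x = \<infinity>: then no nonzero
   multiple of x has finite seminorm, so the line imposes no constraint. A linear functional bounded
   by a seminorm of the family is continuous. Over the complex numbers, v \<mapsto> g v - i g (i v) is
   complex linear with real part g and is bounded by 2 rho. *)

lemma elc_nbhd_mono:
  assumes "J' \<subseteq> J" "e \<le> e'"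
  shows "elc_nbhd J e x \<subseteq> elc_nbhd J' e' x"
  unfolding elc_nbhd_def using assms ennreal_leI[OF assms(2)] by (auto intro: order.strict_trans2)

lemma istopology_elc:
  "istopology (\<lambda>U. \<forall>x0\<in>U. \<exists>J e. finite J \<and> J \<subseteq> F \<and> e > 0 \<and> elc_nbhd J e x0 \<subseteq> U)"
  unfolding istopology_def
proof (intro conjI allI impI ballI)
  fix S T x0
  assume "\<forall>x0\<in>S. \<exists>J e. finite J \<and> J \<subseteq> F \<and> e > 0 \<and> elc_nbhd J e x0 \<subseteq> S"
    and "\<forall>x0\<in>T. \<exists>J e. finite J \<and> J \<subseteq> F \<and> e > 0 \<and> elc_nbhd J e x0 \<subseteq> T"
    and "x0 \<in> S \<inter> T"
  then obtain J1 e1 J2 e2 where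
    "finite J1" "J1 \<subseteq> F" "e1 > 0" "elc_nbhd J1 e1 x0 \<subseteq> S"
    "finite J2" "J2 \<subseteq> F" "e2 > 0" "elc_nbhd J2 e2 x0 \<subseteq> T"
    by (meson IntD1 IntD2)
  moreover have "elc_nbhd (J1 \<union> J2) (min e1 e2) x0 \<subseteq> elc_nbhd J1 e1 x0 \<inter> elc_nbhd J2 e2 x0"
    by (simp add: elc_nbhd_mono)
  ultimately show "\<exists>J e. finite J \<and> J \<subseteq> F \<and> e > 0 \<and> elc_nbhd J e x0 \<subseteq> S \<inter> T"
    by (intro exI[of _ "J1 \<union> J2"] exI[of _ "min e1 e2"]) auto
next
  fix K x0
  assume "\<forall>S\<in>K. \<forall>x0\<in>S. \<exists>J e. finite J \<and> J \<subseteq> F \<and> e > 0 \<and> elc_nbhd J e x0 \<subseteq> S"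
    and "x0 \<in> \<Union>K"
  then show "\<exists>J e. finite J \<and> J \<subseteq> F \<and> e > 0 \<and> elc_nbhd J e x0 \<subseteq> \<Union>K"
    by (meson UnionE Union_upper subset_trans)
qed

lemma openin_elc_topology:
  "openin (elc_topology F) U \<longleftrightarrow>
     (\<forall>x0\<in>U. \<exists>J e. finite J \<and> J \<subseteq> F \<and> e > 0 \<and> elc_nbhd J e x0 \<subseteq> U)"
  unfolding elc_topology_def using istopology_elc[of F] by simp

lemma topspace_elc_topology [simp]: "topspace (elc_topology F) = UNIV"
proof -
  have "openin (elc_topology F) UNIV"
    unfolding openin_elc_topology by (intro ballI exI[of _ "{}"] exI[of _ "1::real"]) auto
  then show ?thesis
    by (simp add: openin_subset subset_antisym)
qed

lemma Hausdorff_elc_topology_imp_seminorm_nonzero: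
  assumes "Hausdorff_space (elc_topology F)" and "x \<noteq> 0"
  shows "\<exists>\<rho>\<in>F. \<rho> x \<noteq> 0"
proof (rule ccontr)
  assume "\<not> (\<exists>\<rho>\<in>F. \<rho> x \<noteq> 0)"
  then have x_near_0: "x \<in> elc_nbhd J e 0" if "J \<subseteq> F" "e > 0" for J e
    using that by (force simp: elc_nbhd_def)
  obtain U V where "openin (elc_topology F) U" "openin (elc_topology F) V"
    "x \<in> U" "0 \<in> V" "disjnt U V"
    using assms unfolding Hausdorff_space_def topspace_elc_topology by blast
  moreover from \<open>openin (elc_topology F) V\<close> \<open>0 \<in> V\<close>
  obtain J e where "J \<subseteq> F" "e > 0" "elc_nbhd J e 0 \<subseteq> V"
    unfolding openin_elc_topology by blast
  ultimately show False
    using x_near_0 by (meson disjnt_iff subsetD)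
qed

lemma continuous_map_elc_topologyI:
  fixes f :: "'v::ab_group_add \<Rightarrow> 'b::real_normed_vector"
  assumes "\<rho> \<in> F" and add: "\<And>u v. f (u + v) = f u + f v" and "C > 0"
    and bound: "\<And>w. ennreal (norm (f w)) \<le> ennreal C * \<rho> w"
  shows "continuous_map (elc_topology F) euclidean f"
  unfolding continuous_map topspace_elc_topology
proof (intro conjI allI impI)
  fix U :: "'b set"
  assume "openin euclidean U"
  then have "open U" by simp
  show "openin (elc_topology F) {y \<in> UNIV. f y \<in> U}"
    unfolding openin_elc_topology
  proof
    fix y assume "y \<in> {y \<in> UNIV. f y \<in> U}"
    then obtain \<epsilon> where "\<epsilon> > 0" and \<epsilon>: "ball (f y) \<epsilon> \<subseteq> U"
      using \<open>open U\<close> open_contains_ball by blast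
    have "f z \<in> U" if "z \<in> elc_nbhd {\<rho>} (\<epsilon> / C) y" for z
    proof -
      have "f z - f y = f (z - y)"
        using add[of "z - y" y] by simp
      then have "ennreal (norm (f z - f y)) \<le> ennreal C * \<rho> (z - y)"
        using bound by simp
      also have "\<dots> < ennreal C * ennreal (\<epsilon> / C)"
        using that \<open>C > 0\<close> by (intro ennreal_mult_strict_left_mono) (auto simp: elc_nbhd_def)
      also have "\<dots> = ennreal \<epsilon>"
        using \<open>C > 0\<close> \<open>\<epsilon> > 0\<close> by (simp flip: ennreal_mult)
      finally have "dist (f y) (f z) < \<epsilon>"
        by (simp add: dist_norm norm_minus_commute ennreal_less_iff)
      then show ?thesis
        using \<epsilon> by auto
    qed
    then show "\<exists>J e. finite J \<and> J \<subseteq> F \<and> e > 0 \<and> elc_nbhd J e y \<subseteq> {y \<in> UNIV. f y \<in> U}"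
      using \<open>\<rho> \<in> F\<close> \<open>\<epsilon> > 0\<close> \<open>C > 0\<close> by (intro exI[of _ "{\<rho>}"] exI[of _ "\<epsilon> / C"]) auto
  qed
qed auto

definition linear_graph :: "('k::field \<Rightarrow> 'v::ab_group_add \<Rightarrow> 'v) \<Rightarrow> ('v \<times> 'k) set \<Rightarrow> bool" where
  "linear_graph sc G \<longleftrightarrow> (0, 0) \<in> G
     \<and> (\<forall>u a v b. (u, a) \<in> G \<longrightarrow> (v, b) \<in> G \<longrightarrow> (u + v, a + b) \<in> G)
     \<and> (\<forall>u a r. (u, a) \<in> G \<longrightarrow> (sc r u, r * a) \<in> G)
     \<and> (\<forall>u a b. (u, a) \<in> G \<longrightarrow> (u, b) \<in> G \<longrightarrow> a = b)"

definition extend_graph :: "('k::field \<Rightarrow> 'v::ab_group_add \<Rightarrow> 'v) \<Rightarrow> ('v \<times> 'k) set \<Rightarrow> 'v \<Rightarrow> 'k \<Rightarrow> ('v \<times> 'k) set" where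
  "extend_graph sc G y c = {(u + sc t y, a + t * c) | u a t. (u, a) \<in> G}"

definition dominated_graph :: "'v set \<Rightarrow> ('v \<Rightarrow> real) \<Rightarrow> ('v \<times> real) set \<Rightarrow> bool" where
  "dominated_graph D q G \<longleftrightarrow> (\<forall>v a. (v, a) \<in> G \<longrightarrow> v \<in> D \<longrightarrow> a \<le> q v)"

context vector_space
begin

lemma linear_graph_zero: "linear_graph scale G \<Longrightarrow> (0, 0) \<in> G"
  unfolding linear_graph_def by blast

lemma linear_graph_add: "linear_graph scale G \<Longrightarrow> (u, a) \<in> G \<Longrightarrow> (v, b) \<in> G \<Longrightarrow> (u + v, a + b) \<in> G"
  unfolding linear_graph_def by blast

lemma linear_graph_scale: "linear_graph scale G \<Longrightarrow> (u, a) \<in> G \<Longrightarrow> (scale r u, r * a) \<in> G"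
  unfolding linear_graph_def by blast

lemma linear_graph_unique: "linear_graph scale G \<Longrightarrow> (u, a) \<in> G \<Longrightarrow> (u, b) \<in> G \<Longrightarrow> a = b"
  unfolding linear_graph_def by blast

lemma linear_graph_minus: "linear_graph scale G \<Longrightarrow> (u, a) \<in> G \<Longrightarrow> (- u, - a) \<in> G"
  using linear_graph_scale[of G u a "- 1"] by simp

lemma linear_graph_diff:
  assumes "linear_graph scale G" "(u, a) \<in> G" "(v, b) \<in> G"
  shows "(u - v, a - b) \<in> G"
  using linear_graph_add[OF assms(1,2) linear_graph_minus[OF assms(1,3)]] by simp

lemma linear_graph_Union_chain:
  assumes "C \<noteq> {}" "\<And>G. G \<in> C \<Longrightarrow> linear_graph scale G"
    and chain: "\<And>G H. G \<in> C \<Longrightarrow> H \<in> C \<Longrightarrow> G \<subseteq> H \<or> H \<subseteq> G"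
  shows "linear_graph scale (\<Union>C)"
proof -
  have common: "\<exists>G\<in>C. p \<in> G \<and> p' \<in> G" if "p \<in> \<Union>C" "p' \<in> \<Union>C" for p p'
    using that chain by blast
  show ?thesis
    unfolding linear_graph_def
  proof (intro conjI allI impI)
    show "(0, 0) \<in> \<Union>C"
      using assms(1,2) linear_graph_zero by blast
    show "(u + v, a + b) \<in> \<Union>C" if "(u, a) \<in> \<Union>C" "(v, b) \<in> \<Union>C" for u a v b
      using common[OF that] assms(2) linear_graph_add by blast
    show "(scale r u, r * a) \<in> \<Union>C" if "(u, a) \<in> \<Union>C" for u a r
      using that assms(2) linear_graph_scale by blast
    show "a = b" if "(u, a) \<in> \<Union>C" "(u, b) \<in> \<Union>C" for u a b
      using common[OF that] assms(2) linear_graph_unique by blast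
  qed
qed

lemma linear_graph_line:
  assumes "x \<noteq> 0"
  shows "linear_graph scale {(scale t x, t * c) | t. True}"
  unfolding linear_graph_def
proof (intro conjI allI impI)
  show "(0, 0) \<in> {(scale t x, t * c) | t. True}"
    by (auto intro!: exI[of _ 0])
  show "(u + v, a + b) \<in> {(scale t x, t * c) | t. True}"
    if "(u, a) \<in> {(scale t x, t * c) | t. True}" "(v, b) \<in> {(scale t x, t * c) | t. True}" for u a v b
  proof -
    from that obtain t1 t2 where "u = scale t1 x" "a = t1 * c" "v = scale t2 x" "b = t2 * c"
      by blast
    then show ?thesis
      by (auto intro!: exI[of _ "t1 + t2"] simp: scale_left_distrib distrib_right)
  qed
  show "(scale r u, r * a) \<in> {(scale t x, t * c) | t. True}"
    if "(u, a) \<in> {(scale t x, t * c) | t. True}" for u a r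
  proof -
    from that obtain t where "u = scale t x" "a = t * c"
      by blast
    then show ?thesis
      by (auto intro!: exI[of _ "r * t"])
  qed
  show "a = b" if "(u, a) \<in> {(scale t x, t * c) | t. True}" "(u, b) \<in> {(scale t x, t * c) | t. True}" for u a b
    using that assms by auto
qed

lemma subset_extend_graph: "G \<subseteq> extend_graph scale G y c"
  unfolding extend_graph_def by force

lemma pair_in_extend_graph: "linear_graph scale G \<Longrightarrow> (y, c) \<in> extend_graph scale G y c"
  unfolding extend_graph_def using linear_graph_zero by force

lemma linear_graph_extend_graph:
  assumes G: "linear_graph scale G" and y: "y \<notin> fst ` G"
  shows "linear_graph scale (extend_graph scale G y c)"
  unfolding linear_graph_def extend_graph_def
proof (intro conjI allI impI)
  show "(0, 0) \<in> {(u + scale t y, a + t * c) | u a t. (u, a) \<in> G}"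
    using linear_graph_zero[OF G] by force
next
  fix u a v b
  assume "(u, a) \<in> {(u + scale t y, a + t * c) | u a t. (u, a) \<in> G}"
    "(v, b) \<in> {(u + scale t y, a + t * c) | u a t. (u, a) \<in> G}"
  then obtain u1 a1 t1 u2 a2 t2 where "(u1, a1) \<in> G" "(u2, a2) \<in> G"
    "u = u1 + scale t1 y" "a = a1 + t1 * c" "v = u2 + scale t2 y" "b = a2 + t2 * c"
    by blast
  then have "(u1 + u2, a1 + a2) \<in> G"
    "u + v = (u1 + u2) + scale (t1 + t2) y" "a + b = (a1 + a2) + (t1 + t2) * c"
    using linear_graph_add[OF G] by (auto simp: scale_left_distrib algebra_simps)
  then show "(u + v, a + b) \<in> {(u + scale t y, a + t * c) | u a t. (u, a) \<in> G}"
    by blast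
next
  fix u a r
  assume "(u, a) \<in> {(u + scale t y, a + t * c) | u a t. (u, a) \<in> G}"
  then obtain u1 a1 t1 where "(u1, a1) \<in> G" "u = u1 + scale t1 y" "a = a1 + t1 * c"
    by blast
  then have "(scale r u1, r * a1) \<in> G"
    "scale r u = scale r u1 + scale (r * t1) y" "r * a = r * a1 + (r * t1) * c"
    using linear_graph_scale[OF G] by (auto simp: scale_right_distrib algebra_simps)
  then show "(scale r u, r * a) \<in> {(u + scale t y, a + t * c) | u a t. (u, a) \<in> G}"
    by blast
next
  fix u a b
  assume "(u, a) \<in> {(u + scale t y, a + t * c) | u a t. (u, a) \<in> G}"
    "(u, b) \<in> {(u + scale t y, a + t * c) | u a t. (u, a) \<in> G}"
  then obtain u1 a1 t1 u2 a2 t2 where G12: "(u1, a1) \<in> G" "(u2, a2) \<in> G"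
    and u: "u = u1 + scale t1 y" "u = u2 + scale t2 y" and "a = a1 + t1 * c" "b = a2 + t2 * c"
    by blast
  have "t1 = t2"
  proof (rule ccontr)
    assume "t1 \<noteq> t2"
    have "scale (t1 - t2) y = u2 - u1"
      using u by (simp add: scale_left_diff_distrib algebra_simps)
    then have "scale (inverse (t1 - t2)) (u2 - u1) = y"
      using \<open>t1 \<noteq> t2\<close> by (metis left_inverse right_minus_eq scale_one scale_scale)
    moreover have "(scale (inverse (t1 - t2)) (u2 - u1), inverse (t1 - t2) * (a2 - a1)) \<in> G"
      using linear_graph_scale[OF G linear_graph_diff[OF G G12(2,1)]] .
    ultimately have "y \<in> fst ` G"
      by (metis fst_conv image_eqI)
    with y show False ..
  qed
  with u G12 have "a1 = a2"
    using linear_graph_unique[OF G] by auto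
  with \<open>t1 = t2\<close> show "a = b"
    using \<open>a = _\<close> \<open>b = _\<close> by simp
qed

lemma linear_graph_total_imp_linear:
  assumes G: "linear_graph scale G" and total: "\<And>v. \<exists>a. (v, a) \<in> G"
  shows "\<exists>f. Vector_Spaces.linear scale (*) f \<and> (\<forall>v a. (v, a) \<in> G \<longleftrightarrow> a = f v)"
proof -
  define f where "f v = (THE a. (v, a) \<in> G)" for v
  have graph: "(v, a) \<in> G \<longleftrightarrow> a = f v" for v a
    using total[of v] linear_graph_unique[OF G] unfolding f_def by (metis theI)
  have "Vector_Spaces.linear scale (*) f"
    unfolding Vector_Spaces.linear_iff
  proof (intro conjI allI)
    show "vector_space scale" by unfold_locales
    show "vector_space ((*) :: 'a \<Rightarrow> 'a \<Rightarrow> 'a)"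
      by (rule vector_space_over_itself.vector_space_axioms)
    show "f (u + v) = f u + f v" for u v
      using graph linear_graph_add[OF G] by metis
    show "f (scale r u) = r * f u" for r u
      using graph linear_graph_scale[OF G] by metis
  qed
  with graph show ?thesis by blast
qed

end

lemma real_sets_separated:
  fixes A B :: "real set"
  assumes "A = {} \<longleftrightarrow> B = {}" and "\<And>\<alpha> \<beta>. \<alpha> \<in> A \<Longrightarrow> \<beta> \<in> B \<Longrightarrow> \<alpha> \<le> \<beta>"
  shows "\<exists>c. (\<forall>\<alpha>\<in>A. \<alpha> \<le> c) \<and> (\<forall>\<beta>\<in>B. c \<le> \<beta>)"
proof (cases "A = {}")
  case False
  then obtain \<beta> where "\<beta> \<in> B"
    using assms(1) by blast
  then have "bdd_above A"
    using assms(2) by (auto simp: bdd_above_def)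
  then have "\<forall>\<alpha>\<in>A. \<alpha> \<le> Sup A"
    by (simp add: cSup_upper)
  moreover have "\<forall>\<beta>\<in>B. Sup A \<le> \<beta>"
    using False assms(2) by (simp add: cSup_least)
  ultimately show ?thesis
    by blast
qed (use assms(1) in simp)

locale sublinear_on = vector_space sc for sc :: "real \<Rightarrow> 'v::ab_group_add \<Rightarrow> 'v" +
  fixes D :: "'v set" and q :: "'v \<Rightarrow> real"
  assumes subspace_D: "subspace D"
    and q_add: "u \<in> D \<Longrightarrow> v \<in> D \<Longrightarrow> q (u + v) \<le> q u + q v"
    and q_scale: "u \<in> D \<Longrightarrow> r \<ge> 0 \<Longrightarrow> q (sc r u) = r * q u"
begin

lemma extension_bounds_ordered:
  assumes M: "linear_graph sc M" "dominated_graph D q M"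
    and "(m1, a1) \<in> M" "m1 - y \<in> D" and "(m2, a2) \<in> M" "m2 + y \<in> D"
  shows "a1 - q (m1 - y) \<le> q (m2 + y) - a2"
proof -
  have split: "m1 + m2 = (m1 - y) + (m2 + y)"
    by simp
  have "a1 + a2 \<le> q (m1 + m2)"
    using M(2) linear_graph_add[OF M(1) assms(3,5)] subspace_add[OF subspace_D assms(4,6)]
    unfolding dominated_graph_def split by blast
  also have "\<dots> \<le> q (m1 - y) + q (m2 + y)"
    unfolding split using assms(4,6) by (rule q_add)
  finally show ?thesis
    by simp
qed

lemma exists_extension_constant:
  assumes M: "linear_graph sc M" "dominated_graph D q M"
  shows "\<exists>c. (\<forall>m a. (m, a) \<in> M \<longrightarrow> m - y \<in> D \<longrightarrow> a - q (m - y) \<le> c)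
           \<and> (\<forall>m a. (m, a) \<in> M \<longrightarrow> m + y \<in> D \<longrightarrow> c \<le> q (m + y) - a)"
proof -
  define A where "A = {a - q (m - y) | m a. (m, a) \<in> M \<and> m - y \<in> D}"
  define B where "B = {q (m + y) - a | m a. (m, a) \<in> M \<and> m + y \<in> D}"
  have "\<alpha> \<le> \<beta>" if "\<alpha> \<in> A" "\<beta> \<in> B" for \<alpha> \<beta>
    using that extension_bounds_ordered[OF M] unfolding A_def B_def by blast
  moreover have "A = {} \<longleftrightarrow> B = {}"
  proof -
    have flip: "(- m, - a) \<in> M \<and> - m + s \<in> D" if "(m, a) \<in> M" "m - s \<in> D" for m a s
      using linear_graph_minus[OF M(1) that(1)] subspace_neg[OF subspace_D that(2)] by simp
    have "B \<noteq> {}" if "A \<noteq> {}"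
      using that flip[of _ _ y] unfolding A_def B_def by fastforce
    moreover have "A \<noteq> {}" if "B \<noteq> {}"
      using that flip[of _ _ "- y"] unfolding A_def B_def by fastforce
    ultimately show ?thesis
      by blast
  qed
  ultimately obtain c where "\<forall>\<alpha>\<in>A. \<alpha> \<le> c" "\<forall>\<beta>\<in>B. c \<le> \<beta>"
    using real_sets_separated[of A B] by blast
  then show ?thesis
    unfolding A_def B_def by blast
qed

lemma dominated_extend_graph_nonneg:
  assumes M: "linear_graph sc M" "dominated_graph D q M"
    and c: "\<And>m a. (m, a) \<in> M \<Longrightarrow> m + y \<in> D \<Longrightarrow> c \<le> q (m + y) - a"
    and "(m, a) \<in> M" "t \<ge> 0" "m + sc t y \<in> D"
  shows "a + t * c \<le> q (m + sc t y)"
proof (cases "t = 0")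
  case True
  then show ?thesis
    using M(2) assms(4,6) by (simp add: dominated_graph_def)
next
  case False
  with \<open>t \<ge> 0\<close> have "t > 0"
    by simp
  define m' where "m' = sc (inverse t) m"
  have "(m', inverse t * a) \<in> M"
    unfolding m'_def using linear_graph_scale[OF M(1) \<open>(m, a) \<in> M\<close>] .
  have v: "m + sc t y = sc t (m' + y)"
    using \<open>t > 0\<close> by (simp add: m'_def scale_right_distrib)
  then have "m' + y \<in> D"
    using subspace_scale[OF subspace_D \<open>m + sc t y \<in> D\<close>, of "inverse t"] \<open>t > 0\<close> by simp
  have "t * c \<le> t * (q (m' + y) - inverse t * a)"
    using c[OF \<open>(m', inverse t * a) \<in> M\<close> \<open>m' + y \<in> D\<close>] \<open>t > 0\<close> by simp
  also have "\<dots> = q (m + sc t y) - a"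
    using \<open>t > 0\<close> q_scale[OF \<open>m' + y \<in> D\<close>, of t] by (simp add: v right_diff_distrib)
  finally show ?thesis
    by simp
qed

lemma dominated_extend_graph:
  assumes M: "linear_graph sc M" "dominated_graph D q M"
    and c_lower: "\<And>m a. (m, a) \<in> M \<Longrightarrow> m - y \<in> D \<Longrightarrow> a - q (m - y) \<le> c"
    and c_upper: "\<And>m a. (m, a) \<in> M \<Longrightarrow> m + y \<in> D \<Longrightarrow> c \<le> q (m + y) - a"
  shows "dominated_graph D q (extend_graph sc M y c)"
  unfolding dominated_graph_def extend_graph_def
proof (intro allI impI)
  fix v b
  assume "(v, b) \<in> {(m + sc t y, a + t * c) | m a t. (m, a) \<in> M}" and "v \<in> D"
  then obtain m a t where "(m, a) \<in> M" "v = m + sc t y" "b = a + t * c"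
    by blast
  show "b \<le> q v"
  proof (cases "t \<ge> 0")
    case True
    then show ?thesis
      using dominated_extend_graph_nonneg[OF M c_upper \<open>(m, a) \<in> M\<close> True] \<open>v \<in> D\<close> \<open>v = _\<close> \<open>b = _\<close>
      by simp
  next
    case False
    \<comment> \<open>\<open>(- y, - c)\<close> generates the same extension, which reduces \<open>t < 0\<close> to the case just shown\<close>
    have c_neg: "- c \<le> q (m' + - y) - a'" if "(m', a') \<in> M" "m' + - y \<in> D" for m' a'
      using c_lower[of m' a'] that by simp
    have "a + (- t) * (- c) \<le> q (m + sc (- t) (- y))"
      using dominated_extend_graph_nonneg[OF M c_neg \<open>(m, a) \<in> M\<close>, of "- t"] False \<open>v \<in> D\<close> \<open>v = _\<close>
      by simp
    then show ?thesis
      using \<open>v = _\<close> \<open>b = _\<close> by simp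
  qed
qed

lemma exists_maximal_dominated_graph:
  assumes "linear_graph sc G0" "dominated_graph D q G0"
  obtains M where "linear_graph sc M" "dominated_graph D q M" "G0 \<subseteq> M"
    "\<And>G. linear_graph sc G \<Longrightarrow> dominated_graph D q G \<Longrightarrow> M \<subseteq> G \<Longrightarrow> G = M"
proof -
  define S where "S = {G. linear_graph sc G \<and> dominated_graph D q G \<and> G0 \<subseteq> G}"
  have "\<exists>M\<in>S. \<forall>G\<in>S. M \<subseteq> G \<longrightarrow> G = M"
  proof (rule subset_Zorn_nonempty)
    show "S \<noteq> {}"
      using assms unfolding S_def by blast
    show "\<Union>C \<in> S" if "C \<noteq> {}" "subset.chain S C" for C
    proof -
      have CS: "\<And>G. G \<in> C \<Longrightarrow> linear_graph sc G \<and> dominated_graph D q G \<and> G0 \<subseteq> G"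
        and chain: "\<And>G H. G \<in> C \<Longrightarrow> H \<in> C \<Longrightarrow> G \<subseteq> H \<or> H \<subseteq> G"
        using that(2) unfolding subset_chain_def S_def by auto
      have "linear_graph sc (\<Union>C)"
        using \<open>C \<noteq> {}\<close> CS chain by (intro linear_graph_Union_chain) auto
      moreover have "dominated_graph D q (\<Union>C)"
        using CS unfolding dominated_graph_def by blast
      moreover have "G0 \<subseteq> \<Union>C"
        using CS \<open>C \<noteq> {}\<close> by blast
      ultimately show ?thesis
        unfolding S_def by blast
    qed
  qed
  then show ?thesis
    using that unfolding S_def by auto
qed

lemma maximal_dominated_graph_total:
  assumes M: "linear_graph sc M" "dominated_graph D q M"
    and maximal: "\<And>G. linear_graph sc G \<Longrightarrow> dominated_graph D q G \<Longrightarrow> M \<subseteq> G \<Longrightarrow> G = M"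
  shows "\<exists>a. (v, a) \<in> M"
proof (rule ccontr)
  assume v: "\<nexists>a. (v, a) \<in> M"
  then have "v \<notin> fst ` M"
    by force
  obtain c where "\<And>m a. (m, a) \<in> M \<Longrightarrow> m - v \<in> D \<Longrightarrow> a - q (m - v) \<le> c"
    "\<And>m a. (m, a) \<in> M \<Longrightarrow> m + v \<in> D \<Longrightarrow> c \<le> q (m + v) - a"
    using exists_extension_constant[OF M] by blast
  then have "dominated_graph D q (extend_graph sc M v c)"
    using dominated_extend_graph[OF M] by blast
  then have "extend_graph sc M v c = M"
    using maximal linear_graph_extend_graph[OF M(1) \<open>v \<notin> fst ` M\<close>] subset_extend_graph by blast
  then show False
    using pair_in_extend_graph[OF M(1)] v by metis
qed

theorem hahn_banach:
  assumes "linear_graph sc G0" "dominated_graph D q G0"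
  shows "\<exists>f. Vector_Spaces.linear sc (*) f \<and> (\<forall>v a. (v, a) \<in> G0 \<longrightarrow> f v = a) \<and> (\<forall>v\<in>D. f v \<le> q v)"
proof -
  obtain M where M: "linear_graph sc M" "dominated_graph D q M" "G0 \<subseteq> M"
    and maximal: "\<And>G. linear_graph sc G \<Longrightarrow> dominated_graph D q G \<Longrightarrow> M \<subseteq> G \<Longrightarrow> G = M"
    using exists_maximal_dominated_graph[OF assms] by blast
  obtain f where "Vector_Spaces.linear sc (*) f" and graph: "\<And>v a. (v, a) \<in> M \<longleftrightarrow> a = f v"
    using linear_graph_total_imp_linear[OF M(1) maximal_dominated_graph_total[OF M(1,2) maximal]] by metis
  moreover have "\<forall>v a. (v, a) \<in> G0 \<longrightarrow> f v = a"
    using M(3) graph by auto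
  moreover have "\<forall>v\<in>D. f v \<le> q v"
    using M(2) graph unfolding dominated_graph_def by blast
  ultimately show ?thesis
    by blast
qed

end

lemma ext_seminorm_zero:
  fixes sc :: "'k::real_normed_field \<Rightarrow> 'v::ab_group_add \<Rightarrow> 'v"
  assumes "vector_space sc" "ext_seminorm sc \<rho>"
  shows "\<rho> 0 = 0"
proof -
  interpret vector_space sc by (rule assms(1))
  from assms(2) have "\<rho> (sc 0 0) = ennreal (norm (0 :: 'k)) * \<rho> 0"
    unfolding ext_seminorm_def by blast
  then show ?thesis
    by simp
qed

lemma ext_seminorm_minus:
  fixes sc :: "'k::real_normed_field \<Rightarrow> 'v::ab_group_add \<Rightarrow> 'v"
  assumes "vector_space sc" "ext_seminorm sc \<rho>"
  shows "\<rho> (- v) = \<rho> v"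
proof -
  interpret vector_space sc by (rule assms(1))
  from assms(2) have "\<rho> (sc (- 1) v) = ennreal (norm (- 1 :: 'k)) * \<rho> v"
    unfolding ext_seminorm_def by blast
  then show ?thesis
    by simp
qed

lemma vector_space_of_real_scale:
  fixes sc :: "'k::real_normed_field \<Rightarrow> 'v::ab_group_add \<Rightarrow> 'v"
  assumes "vector_space sc"
  shows "vector_space (\<lambda>r. sc (of_real r))"
proof -
  interpret vector_space sc by (rule assms)
  show ?thesis
    by unfold_locales (simp_all add: scale_right_distrib scale_left_distrib)
qed

lemma ext_seminorm_of_real_scale:
  fixes sc :: "'k::real_normed_field \<Rightarrow> 'v::ab_group_add \<Rightarrow> 'v"
  assumes "ext_seminorm sc \<rho>"
  shows "ext_seminorm (\<lambda>r. sc (of_real r)) \<rho>"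
  using assms unfolding ext_seminorm_def by simp

lemma sublinear_on_ext_seminorm_finite:
  fixes sc :: "real \<Rightarrow> 'v::ab_group_add \<Rightarrow> 'v"
  assumes "vector_space sc" and \<rho>: "ext_seminorm sc \<rho>"
  shows "sublinear_on sc {v. \<rho> v \<noteq> top} (\<lambda>v. enn2real (\<rho> v))"
proof -
  interpret vector_space sc by (rule assms(1))
  have scale: "\<rho> (sc r v) = ennreal \<bar>r\<bar> * \<rho> v" for r v
    using \<rho> unfolding ext_seminorm_def by simp
  have triangle: "\<rho> (u + v) \<le> \<rho> u + \<rho> v" for u v
    using \<rho> unfolding ext_seminorm_def by blast
  show ?thesis
  proof unfold_locales
    show "subspace {v. \<rho> v \<noteq> top}"
      unfolding subspace_def
    proof (intro conjI ballI allI)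
      show "0 \<in> {v. \<rho> v \<noteq> top}"
        using ext_seminorm_zero[OF assms] by simp
      show "u + v \<in> {v. \<rho> v \<noteq> top}" if "u \<in> {v. \<rho> v \<noteq> top}" "v \<in> {v. \<rho> v \<noteq> top}" for u v
        using that triangle[of u v] by (metis ennreal_add_eq_top mem_Collect_eq top_unique)
      show "sc r u \<in> {v. \<rho> v \<noteq> top}" if "u \<in> {v. \<rho> v \<noteq> top}" for r u
        using that by (simp add: scale ennreal_mult_eq_top_iff)
    qed
    show "enn2real (\<rho> (u + v)) \<le> enn2real (\<rho> u) + enn2real (\<rho> v)"
      if "u \<in> {v. \<rho> v \<noteq> top}" "v \<in> {v. \<rho> v \<noteq> top}" for u v
    proof -
      have "enn2real (\<rho> (u + v)) \<le> enn2real (\<rho> u + \<rho> v)"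
        using that triangle[of u v] by (intro enn2real_mono) (auto simp: less_top)
      also have "\<dots> = enn2real (\<rho> u) + enn2real (\<rho> v)"
        using that by (simp add: enn2real_plus less_top)
      finally show ?thesis .
    qed
    show "enn2real (\<rho> (sc r u)) = r * enn2real (\<rho> u)" if "r \<ge> 0" for u r
      using that by (simp add: scale enn2real_mult)
  qed
qed

lemma ext_seminorm_abs_le_if_dominated:
  fixes sc :: "real \<Rightarrow> 'v::ab_group_add \<Rightarrow> 'v"
  assumes "vector_space sc" "ext_seminorm sc \<rho>" and g: "Vector_Spaces.linear sc (*) g"
    and g_le: "\<And>v. \<rho> v \<noteq> top \<Longrightarrow> g v \<le> enn2real (\<rho> v)"
  shows "ennreal \<bar>g w\<bar> \<le> \<rho> w"
proof -
  interpret vector_space sc by (rule assms(1))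
  show ?thesis
  proof (cases "\<rho> w = top")
    case False
    have "g (sc (- 1) w) = - 1 * g w"
      using g unfolding Vector_Spaces.linear_iff by blast
    then have "g (- w) = - g w"
      by simp
    moreover have "g w \<le> enn2real (\<rho> w)" "g (- w) \<le> enn2real (\<rho> w)"
      using g_le[of w] g_le[of "- w"] False ext_seminorm_minus[OF assms(1,2), of w] by auto
    ultimately have "\<bar>g w\<bar> \<le> enn2real (\<rho> w)"
      by linarith
    then have "ennreal \<bar>g w\<bar> \<le> ennreal (enn2real (\<rho> w))"
      by (rule ennreal_leI)
    then show ?thesis
      using False by (metis ennreal_enn2real less_top)
  qed simp
qed

lemma ext_seminorm_dominated_functional:
  fixes sc :: "real \<Rightarrow> 'v::ab_group_add \<Rightarrow> 'v"
  assumes "vector_space sc" and \<rho>: "ext_seminorm sc \<rho>" and "\<rho> x \<noteq> 0"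
  shows "\<exists>g. Vector_Spaces.linear sc (*) g \<and> g x \<noteq> 0 \<and> (\<forall>w. ennreal \<bar>g w\<bar> \<le> \<rho> w)"
proof -
  interpret sublinear_on sc "{v. \<rho> v \<noteq> top}" "\<lambda>v. enn2real (\<rho> v)"
    using sublinear_on_ext_seminorm_finite[OF assms(1,2)] .
  have scale: "\<rho> (sc r v) = ennreal \<bar>r\<bar> * \<rho> v" for r v
    using \<rho> unfolding ext_seminorm_def by simp
  have "x \<noteq> 0"
    using ext_seminorm_zero[OF assms(1,2)] \<open>\<rho> x \<noteq> 0\<close> by auto
  define c where "c = (if \<rho> x = top then 1 else enn2real (\<rho> x))"
  have "c \<noteq> 0"
    using \<open>\<rho> x \<noteq> 0\<close> by (auto simp: c_def enn2real_eq_0_iff)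
  have "t * c \<le> enn2real (\<rho> (sc t x))" if "\<rho> (sc t x) \<noteq> top" for t
  proof (cases "\<rho> x = top")
    case True
    then have "t = 0"
      using that by (auto simp: scale ennreal_mult_eq_top_iff)
    then show ?thesis
      by simp
  next
    case False
    have "t * enn2real (\<rho> x) \<le> \<bar>t\<bar> * enn2real (\<rho> x)"
      by (intro mult_right_mono) auto
    then show ?thesis
      using False by (simp add: c_def scale enn2real_mult)
  qed
  then have "dominated_graph {v. \<rho> v \<noteq> top} (\<lambda>v. enn2real (\<rho> v)) {(sc t x, t * c) | t. True}"
    unfolding dominated_graph_def by blast
  from hahn_banach[OF linear_graph_line[OF \<open>x \<noteq> 0\<close>] this]
  obtain g where g: "Vector_Spaces.linear sc (*) g"
    and g_line: "\<forall>v a. (v, a) \<in> {(sc t x, t * c) | t. True} \<longrightarrow> g v = a"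
    and g_le: "\<forall>v\<in>{v. \<rho> v \<noteq> top}. g v \<le> enn2real (\<rho> v)"
    by blast
  have "(x, c) \<in> {(sc t x, t * c) | t. True}"
    by (intro CollectI exI[of _ 1]) simp
  with g_line \<open>c \<noteq> 0\<close> have "g x \<noteq> 0"
    by blast
  moreover have "ennreal \<bar>g w\<bar> \<le> \<rho> w" for w
    using ext_seminorm_abs_le_if_dominated[OF assms(1,2) g] g_le by blast
  ultimately show ?thesis
    using g by blast
qed

lemma linear_complexification:
  fixes sc :: "complex \<Rightarrow> 'v::ab_group_add \<Rightarrow> 'v"
  assumes "vector_space sc" and g: "Vector_Spaces.linear (\<lambda>r. sc (of_real r)) (*) g"
  shows "Vector_Spaces.linear sc (*) (\<lambda>v. of_real (g v) - \<i> * of_real (g (sc \<i> v)))"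
    (is "Vector_Spaces.linear sc (*) ?f")
proof -
  interpret vector_space sc by (rule assms(1))
  have g_add: "g (u + v) = g u + g v" and g_real: "g (sc (of_real r) v) = r * g v" for u v r
    using g unfolding Vector_Spaces.linear_iff by blast+
  have f_add: "?f (u + v) = ?f u + ?f v" for u v
    by (simp add: g_add scale_right_distrib algebra_simps)
  have f_real: "?f (sc (of_real r) v) = of_real r * ?f v" for r v
  proof -
    have "g (sc \<i> (sc (of_real r) v)) = r * g (sc \<i> v)"
      using g_real[of r "sc \<i> v"] by (simp add: mult.commute)
    then show ?thesis
      by (simp add: g_real algebra_simps)
  qed
  have f_i: "?f (sc \<i> v) = \<i> * ?f v" for v
    using g_real[of "-1" v] by (simp add: algebra_simps)
  have "?f (sc c v) = c * ?f v" for c v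
  proof -
    have "sc c v = sc (of_real (Re c)) v + sc (of_real (Im c)) (sc \<i> v)"
      by (simp add: complex_eq_iff flip: scale_left_distrib)
    then have "?f (sc c v) = of_real (Re c) * ?f v + of_real (Im c) * (\<i> * ?f v)"
      by (simp only: f_add f_real f_i)
    also have "\<dots> = c * ?f v"
      by (simp add: algebra_simps complex_eq_iff)
    finally show ?thesis .
  qed
  then show ?thesis
    unfolding Vector_Spaces.linear_iff
    using assms(1) vector_space_over_itself.vector_space_axioms f_add by blast
qed

lemma Hausdorff_ext_lcs_separating_functional_real:
  fixes sc :: "real \<Rightarrow> 'v::ab_group_add \<Rightarrow> 'v"
  assumes "ext_lcs sc F" "Hausdorff_space (elc_topology F)" "x \<noteq> 0"
  shows "\<exists>f. Vector_Spaces.linear sc (*) f \<and> continuous_map (elc_topology F) euclidean f \<and> f x \<noteq> 0"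
proof -
  obtain \<rho> where "\<rho> \<in> F" "\<rho> x \<noteq> 0"
    using Hausdorff_elc_topology_imp_seminorm_nonzero assms(2,3) by blast
  have "vector_space sc" "ext_seminorm sc \<rho>"
    using assms(1) \<open>\<rho> \<in> F\<close> unfolding ext_lcs_def by auto
  then obtain g where g: "Vector_Spaces.linear sc (*) g" "g x \<noteq> 0" "\<forall>w. ennreal \<bar>g w\<bar> \<le> \<rho> w"
    using ext_seminorm_dominated_functional \<open>\<rho> x \<noteq> 0\<close> by blast
  have "g (u + v) = g u + g v" for u v
    using g(1) unfolding Vector_Spaces.linear_iff by blast
  then have "continuous_map (elc_topology F) euclidean g"
    by (rule continuous_map_elc_topologyI[OF \<open>\<rho> \<in> F\<close>, of _ 1]) (use g(3) in simp_all)
  with g show ?thesis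
    by blast
qed

lemma Hausdorff_ext_lcs_separating_functional_complex:
  fixes sc :: "complex \<Rightarrow> 'v::ab_group_add \<Rightarrow> 'v"
  assumes "ext_lcs sc F" "Hausdorff_space (elc_topology F)" "x \<noteq> 0"
  shows "\<exists>f. Vector_Spaces.linear sc (*) f \<and> continuous_map (elc_topology F) euclidean f \<and> f x \<noteq> 0"
proof -
  obtain \<rho> where "\<rho> \<in> F" "\<rho> x \<noteq> 0"
    using Hausdorff_elc_topology_imp_seminorm_nonzero assms(2,3) by blast
  have "vector_space sc" and \<rho>: "ext_seminorm sc \<rho>"
    using assms(1) \<open>\<rho> \<in> F\<close> unfolding ext_lcs_def by auto
  obtain g where g: "Vector_Spaces.linear (\<lambda>r. sc (of_real r)) (*) g" "g x \<noteq> 0"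
    and g_le: "\<forall>w. ennreal \<bar>g w\<bar> \<le> \<rho> w"
    using ext_seminorm_dominated_functional[OF vector_space_of_real_scale[OF \<open>vector_space sc\<close>]
      ext_seminorm_of_real_scale[OF \<rho>] \<open>\<rho> x \<noteq> 0\<close>] by blast
  define f where "f v = of_real (g v) - \<i> * of_real (g (sc \<i> v))" for v
  have f: "Vector_Spaces.linear sc (*) f"
    unfolding f_def using linear_complexification[OF \<open>vector_space sc\<close> g(1)] .
  have "Re (f x) = g x"
    by (simp add: f_def)
  with g(2) have "f x \<noteq> 0"
    by auto
  have f_add: "f (u + v) = f u + f v" for u v
    using f unfolding Vector_Spaces.linear_iff by blast
  have "ennreal (norm (f w)) \<le> ennreal 2 * \<rho> w" for w
  proof -
    have "norm (f w) \<le> norm (complex_of_real (g w)) + norm (\<i> * complex_of_real (g (sc \<i> w)))"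
      unfolding f_def by (rule norm_triangle_ineq4)
    also have "\<dots> = \<bar>g w\<bar> + \<bar>g (sc \<i> w)\<bar>"
      by (simp add: norm_mult)
    finally have "ennreal (norm (f w)) \<le> ennreal \<bar>g w\<bar> + ennreal \<bar>g (sc \<i> w)\<bar>"
      by (simp add: ennreal_leI flip: ennreal_plus)
    also have "\<dots> \<le> \<rho> w + \<rho> (sc \<i> w)"
      using g_le by (intro add_mono) auto
    also have "\<rho> (sc \<i> w) = \<rho> w"
      using \<rho> unfolding ext_seminorm_def by simp
    also have "\<rho> w + \<rho> w = ennreal 2 * \<rho> w"
      by (simp add: mult_2)
    finally show ?thesis .
  qed
  with f_add have "continuous_map (elc_topology F) euclidean f"
    by (intro continuous_map_elc_topologyI[OF \<open>\<rho> \<in> F\<close>, of _ 2]) simp_all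
  with f \<open>f x \<noteq> 0\<close> show ?thesis
    by blast
qed

theorem corollary3p10:
  fixes x :: "'v::ab_group_add"
  shows
   "(\<forall>(sc :: real \<Rightarrow> 'v \<Rightarrow> 'v) F.
       ext_lcs sc F \<longrightarrow> Hausdorff_space (elc_topology F) \<longrightarrow> x \<noteq> 0 \<longrightarrow>
       (\<exists>f :: 'v \<Rightarrow> real. Vector_Spaces.linear sc (*) f \<and>
           continuous_map (elc_topology F) euclidean f \<and> f x \<noteq> 0)) \<and>
    (\<forall>(sc :: complex \<Rightarrow> 'v \<Rightarrow> 'v) F.
       ext_lcs sc F \<longrightarrow> Hausdorff_space (elc_topology F) \<longrightarrow> x \<noteq> 0 \<longrightarrow>
       (\<exists>f :: 'v \<Rightarrow> complex. Vector_Spaces.linear sc (*) f \<and>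
           continuous_map (elc_topology F) euclidean f \<and> f x \<noteq> 0))"
  using Hausdorff_ext_lcs_separating_functional_real Hausdorff_ext_lcs_separating_functional_complex
  by blast

end
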